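(* Let $\Phi$ satisfy Assumption F1, and let the dag $D$ (designated nodes $s',t'$, at most $n+2$ nodes) and map $\rho:\{1,\dots,n\}\to V(D)$ be as in the characterization theorem, i.e. $x\mapsto$ the ideal $I$ with $\{i:x_i=0\}=\{i:\rho(i)=t'\}\cup\rho^{-1}(I)$ is a bijection from $\mathrm{opt}(\Phi)$ onto the ideals of $D-\{s',t'\}$. Given $D$, $\rho$ and nonnegative weights $w_1,\dots,w_n$ as input, the diameter $\max_{x,y\in\mathrm{opt}(\Phi)}\sum_i w_i|x_i-y_i|$ of $\mathrm{opt}(\Phi)$ in weighted Hamming distance can be computed in $O(n)$ time.
   Context: Assumption F1: $\Phi(x)=-\sum_{1\le i<j\le n}a_{i,j}x_ix_j+\sum_{i=1}^n b_ix_i$ on $x\in\{0,1\}^n$, with all $a_{i,j}\ge0$ and $b_i$ arbitrary rationals. $\mathrm{opt}(\Phi)$ = set of minimizers of $\Phi$. An ideal of a digraph is a node set $I$ such that every predecessor of a node of $I$ is in $I$. *)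

theory Defs
  imports Complex_Main
begin

definition cube :: "nat \<Rightarrow> (nat \<Rightarrow> nat) set" where
  "cube n = {x. (\<forall>i\<in>{1..n}. x i \<in> {0,1}) \<and> (\<forall>i. i \<notin> {1..n} \<longrightarrow> x i = 0)}"

definition Phi :: "nat \<Rightarrow> (nat \<Rightarrow> nat \<Rightarrow> rat) \<Rightarrow> (nat \<Rightarrow> rat) \<Rightarrow> (nat \<Rightarrow> nat) \<Rightarrow> rat" where
  "Phi n a b x = - (\<Sum>j\<in>{1..n}. \<Sum>i\<in>{1..<j}. a i j * of_nat (x i) * of_nat (x j))
                 + (\<Sum>i\<in>{1..n}. b i * of_nat (x i))"

definition opt :: "nat \<Rightarrow> (nat \<Rightarrow> nat \<Rightarrow> rat) \<Rightarrow> (nat \<Rightarrow> rat) \<Rightarrow> (nat \<Rightarrow> nat) set" where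
  "opt n a b = {x \<in> cube n. \<forall>y \<in> cube n. Phi n a b x \<le> Phi n a b y}"

definition is_ideal_del :: "'v set \<Rightarrow> ('v \<times> 'v) set \<Rightarrow> 'v \<Rightarrow> 'v \<Rightarrow> 'v set \<Rightarrow> bool" where
  "is_ideal_del V E s t I \<longleftrightarrow> I \<subseteq> V - {s, t} \<and>
     (\<forall>u v. (u, v) \<in> E \<longrightarrow> u \<in> V - {s, t} \<longrightarrow> v \<in> I \<longrightarrow> u \<in> I)"

definition corresponds :: "nat \<Rightarrow> (nat \<Rightarrow> 'v) \<Rightarrow> 'v \<Rightarrow> (nat \<Rightarrow> nat) \<Rightarrow> 'v set \<Rightarrow> bool" where
  "corresponds n \<rho> t x I \<longleftrightarrow>
     {i\<in>{1..n}. x i = 0} = {i\<in>{1..n}. \<rho> i = t} \<union> {i\<in>{1..n}. \<rho> i \<in> I}"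

definition whamming :: "nat \<Rightarrow> (nat \<Rightarrow> real) \<Rightarrow> (nat \<Rightarrow> nat) \<Rightarrow> (nat \<Rightarrow> nat) \<Rightarrow> real" where
  "whamming n w x y = (\<Sum>i\<in>{1..n}. w i * \<bar>real (x i) - real (y i)\<bar>)"

definition diameter :: "nat \<Rightarrow> (nat \<Rightarrow> real) \<Rightarrow> (nat \<Rightarrow> nat) set \<Rightarrow> real" where
  "diameter n w S = Max {whamming n w x y | x y. x \<in> S \<and> y \<in> S}"

text \<open>An explicit algorithm on the input (D, rho, w), instrumented with a step counter
  (one unit per elementary loop iteration); it returns (result, number of steps).\<close>
fun diam_alg :: "(nat \<Rightarrow> 'v) \<Rightarrow> 'v \<Rightarrow> 'v \<Rightarrow> (nat \<Rightarrow> real) \<Rightarrow> nat list \<Rightarrow> real \<times> nat" where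
  "diam_alg \<rho> s t w [] = (0, 1)"
| "diam_alg \<rho> s t w (i # is) =
     (case diam_alg \<rho> s t w is of (r, c) \<Rightarrow>
        ((if \<rho> i \<noteq> s \<and> \<rho> i \<noteq> t then w i else 0) + r, c + 1))"

end

theory Submission
  imports Defs
begin

text \<open>Under the correspondence with ideals, coordinates mapped to \<open>t'\<close> vanish and coordinates
  mapped to \<open>s'\<close> equal 1 at every optimum, while the optima of the empty ideal and of the full
  ideal \<open>V - {s', t'}\<close> differ in every other coordinate. Hence the diameter is the total weight
  of the coordinates not mapped to \<open>s'\<close> or \<open>t'\<close>, which one pass over \<open>1..n\<close> computes.\<close>

definition free_weight :: "nat \<Rightarrow> (nat \<Rightarrow> 'v) \<Rightarrow> 'v \<Rightarrow> 'v \<Rightarrow> (nat \<Rightarrow> real) \<Rightarrow> real" where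
  "free_weight n \<rho> s t w = (\<Sum>i\<in>{1..n}. if \<rho> i \<noteq> s \<and> \<rho> i \<noteq> t then w i else 0)"

lemma diam_alg_eq_sum_list:
  "diam_alg \<rho> s t w xs = (\<Sum>i\<leftarrow>xs. if \<rho> i \<noteq> s \<and> \<rho> i \<noteq> t then w i else 0, length xs + 1)"
  by (induction xs) auto

lemma diam_alg_upt:
  "diam_alg \<rho> s t w [1..<n+1] = (free_weight n \<rho> s t w, n + 1)"
proof -
  have "set [1..<n+1] = {1..n}" by auto
  then show ?thesis
    by (simp add: diam_alg_eq_sum_list free_weight_def sum_list_distinct_conv_sum_set)
qed

lemma finite_cube: "finite (cube n)"
proof -
  have "cube n = {x. \<forall>i. (i \<in> {1..n} \<longrightarrow> x i \<in> {0, 1}) \<and> (i \<notin> {1..n} \<longrightarrow> x i = 0)}"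
    unfolding cube_def by blast
  moreover have "finite {x. \<forall>i. (i \<in> {1..n} \<longrightarrow> x i \<in> {0, 1::nat}) \<and> (i \<notin> {1..n} \<longrightarrow> x i = 0)}"
    by (rule finite_set_of_finite_funs) auto
  ultimately show ?thesis by simp
qed

lemma cube_coordinate: "x \<in> cube n \<Longrightarrow> i \<in> {1..n} \<Longrightarrow> x i \<in> {0, 1}"
  unfolding cube_def by blast

lemma finite_opt: "finite (opt n a b)"
  using finite_cube by (rule rev_finite_subset) (auto simp: opt_def)

lemma corresponds_zero_iff:
  assumes "corresponds n \<rho> t x I" and "i \<in> {1..n}"
  shows "x i = 0 \<longleftrightarrow> \<rho> i = t \<or> \<rho> i \<in> I"
proof -
  have "i \<in> {i\<in>{1..n}. x i = 0} \<longleftrightarrow> i \<in> {i\<in>{1..n}. \<rho> i = t} \<union> {i\<in>{1..n}. \<rho> i \<in> I}"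
    using assms(1) unfolding corresponds_def by simp
  then show ?thesis using assms(2) by simp
qed

lemma corresponds_pinned:
  assumes "x \<in> cube n" and "corresponds n \<rho> t x I" and "I \<inter> {s, t} = {}" and "s \<noteq> t"
    and "i \<in> {1..n}" and "\<rho> i = s \<or> \<rho> i = t"
  shows "x i = (if \<rho> i = s then 1 else 0)"
proof -
  have "x i \<in> {0, 1}" using cube_coordinate assms(1,5) .
  then show ?thesis using corresponds_zero_iff[OF assms(2,5)] assms(3,4,6) by auto
qed

lemma corresponds_empty_full_differ:
  assumes "corresponds n \<rho> t x {}" and "corresponds n \<rho> t y (V - {s, t})"
    and "i \<in> {1..n}" and "\<rho> i \<in> V" and "\<rho> i \<noteq> s" and "\<rho> i \<noteq> t"
  shows "x i \<noteq> y i"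
  using corresponds_zero_iff[OF assms(1,3)] corresponds_zero_iff[OF assms(2,3)] assms(4-6) by simp

lemma whamming_le_free_weight:
  assumes "x \<in> cube n" and "y \<in> cube n" and "\<And>i. w i \<ge> 0"
    and "\<And>i. i \<in> {1..n} \<Longrightarrow> \<rho> i = s \<or> \<rho> i = t \<Longrightarrow> x i = y i"
  shows "whamming n w x y \<le> free_weight n \<rho> s t w"
  unfolding whamming_def free_weight_def
proof (rule sum_mono)
  fix i assume i: "i \<in> {1..n}"
  have "x i \<in> {0, 1}" "y i \<in> {0, 1}" using cube_coordinate assms(1,2) i by blast+
  then have "w i * \<bar>real (x i) - real (y i)\<bar> \<le> w i" using assms(3)[of i] by auto
  then show "w i * \<bar>real (x i) - real (y i)\<bar> \<le> (if \<rho> i \<noteq> s \<and> \<rho> i \<noteq> t then w i else 0)"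
    using assms(4)[OF i] by auto
qed

lemma whamming_eq_free_weight:
  assumes "x \<in> cube n" and "y \<in> cube n"
    and "\<And>i. i \<in> {1..n} \<Longrightarrow> \<rho> i = s \<or> \<rho> i = t \<Longrightarrow> x i = y i"
    and "\<And>i. i \<in> {1..n} \<Longrightarrow> \<rho> i \<noteq> s \<Longrightarrow> \<rho> i \<noteq> t \<Longrightarrow> x i \<noteq> y i"
  shows "whamming n w x y = free_weight n \<rho> s t w"
  unfolding whamming_def free_weight_def
proof (rule sum.cong)
  fix i assume i: "i \<in> {1..n}"
  have "x i \<in> {0, 1}" "y i \<in> {0, 1}" using cube_coordinate assms(1,2) i by blast+
  then show "w i * \<bar>real (x i) - real (y i)\<bar> = (if \<rho> i \<noteq> s \<and> \<rho> i \<noteq> t then w i else 0)"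
    using assms(3,4)[OF i] by auto
qed simp

lemma diameter_eqI:
  assumes "finite S" and "\<And>x y. x \<in> S \<Longrightarrow> y \<in> S \<Longrightarrow> whamming n w x y \<le> d"
    and "x\<^sub>0 \<in> S" and "y\<^sub>0 \<in> S" and "whamming n w x\<^sub>0 y\<^sub>0 = d"
  shows "diameter n w S = d"
proof -
  have "{whamming n w x y | x y. x \<in> S \<and> y \<in> S} = (\<lambda>(x, y). whamming n w x y) ` (S \<times> S)"
    by auto
  then have "finite {whamming n w x y | x y. x \<in> S \<and> y \<in> S}" using assms(1) by simp
  then show ?thesis unfolding diameter_def by (rule Max_eqI) (use assms(2-5) in auto)
qed

theorem mainTheorem9:
  fixes n :: nat and a :: "nat \<Rightarrow> nat \<Rightarrow> rat" and b :: "nat \<Rightarrow> rat"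
    and V :: "'v set" and E :: "('v \<times> 'v) set" and s t :: 'v
    and \<rho> :: "nat \<Rightarrow> 'v" and w :: "nat \<Rightarrow> real"
  assumes a_nonneg: "\<And>i j. 1 \<le> i \<Longrightarrow> i < j \<Longrightarrow> j \<le> n \<Longrightarrow> a i j \<ge> 0"
    and finV: "finite V" and cardV: "card V \<le> n + 2"
    and E_V: "E \<subseteq> V \<times> V" and dag: "acyclic E"
    and st: "s \<in> V" "t \<in> V" "s \<noteq> t"
    and rho_V: "\<rho> ` {1..n} \<subseteq> V"
    and bij1: "\<forall>x \<in> opt n a b. \<exists>!I. is_ideal_del V E s t I \<and> corresponds n \<rho> t x I"
    and bij2: "\<forall>I. is_ideal_del V E s t I \<longrightarrow> (\<exists>!x. x \<in> opt n a b \<and> corresponds n \<rho> t x I)"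
    and w_nonneg: "\<And>i. w i \<ge> 0"
  shows "fst (diam_alg \<rho> s t w [1..<n+1]) = diameter n w (opt n a b)
         \<and> snd (diam_alg \<rho> s t w [1..<n+1]) \<le> n + 1"
proof -
  have in_cube: "x \<in> cube n" if "x \<in> opt n a b" for x
    using that unfolding opt_def by blast
  have pinned: "x i = (if \<rho> i = s then 1 else 0)"
    if "x \<in> opt n a b" "i \<in> {1..n}" "\<rho> i = s \<or> \<rho> i = t" for x i
  proof -
    obtain I where "is_ideal_del V E s t I" "corresponds n \<rho> t x I" using bij1 \<open>x \<in> opt n a b\<close> by blast
    moreover have "x \<in> cube n" using in_cube that(1) .
    ultimately show ?thesis
      using corresponds_pinned[of x n \<rho> t I s i] that(2,3) st(3) unfolding is_ideal_del_def by blast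
  qed
  have "is_ideal_del V E s t {}" "is_ideal_del V E s t (V - {s, t})"
    using E_V unfolding is_ideal_del_def by auto
  then obtain x\<^sub>0 x\<^sub>1 where x\<^sub>0: "x\<^sub>0 \<in> opt n a b" "corresponds n \<rho> t x\<^sub>0 {}"
    and x\<^sub>1: "x\<^sub>1 \<in> opt n a b" "corresponds n \<rho> t x\<^sub>1 (V - {s, t})"
    using bij2 by meson
  have free_differ: "x\<^sub>0 i \<noteq> x\<^sub>1 i" if "i \<in> {1..n}" "\<rho> i \<noteq> s" "\<rho> i \<noteq> t" for i
    using corresponds_empty_full_differ[OF x\<^sub>0(2) x\<^sub>1(2)] that rho_V by blast
  have "whamming n w x\<^sub>0 x\<^sub>1 = free_weight n \<rho> s t w"
    by (rule whamming_eq_free_weight[OF in_cube[OF x\<^sub>0(1)] in_cube[OF x\<^sub>1(1)]])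
      (simp_all add: pinned x\<^sub>0(1) x\<^sub>1(1) free_differ)
  moreover have "whamming n w x y \<le> free_weight n \<rho> s t w" if "x \<in> opt n a b" "y \<in> opt n a b" for x y
    by (rule whamming_le_free_weight[OF in_cube[OF that(1)] in_cube[OF that(2)] w_nonneg])
      (simp add: pinned that)
  ultimately have "diameter n w (opt n a b) = free_weight n \<rho> s t w"
    by (intro diameter_eqI[OF finite_opt _ x\<^sub>0(1) x\<^sub>1(1)])
  then show ?thesis unfolding diam_alg_upt by simp
qed

end
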